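(* Let $(X,Y)$ be any one of the pairs $(F,L)$, $(L,F)$, $(J,j)$, $(j,J)$, $(P,Q)$, $(Q,P)$. For integers $a,b,c,d,e$ put $$\Delta_{xy}=X_{d-a}Y_{e-b}-X_{e-a}Y_{d-b},\quad \Delta_1=X_{d-c}Y_{e-b}-X_{e-c}Y_{d-b},\quad \Delta_2=X_{d-a}X_{e-c}-X_{e-a}X_{d-c}.$$ Then for all integers $k,m$, provided $\Delta_1\neq0$, $\Delta_2\neq0$ and (when $k<0$) $\Delta_{xy}\neq0$, $$\sum_{r=0}^k\left(\frac{\Delta_{xy}}{\Delta_1}\right)^rY_{m-k(a-c)-b+c+(a-c)r}=\frac{\Delta_{xy}}{\Delta_2}\left(\frac{\Delta_{xy}}{\Delta_1}\right)^kX_m-\frac{\Delta_1}{\Delta_2}X_{m-(k+1)(a-c)}.$$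
   Context: All sequences are indexed by $n\in\mathbb Z$. Fibonacci numbers $F_n$ and Lucas numbers $L_n$: $F_n=F_{n-1}+F_{n-2}$, $L_n=L_{n-1}+L_{n-2}$ for all $n\in\mathbb Z$, with $F_0=0,F_1=1,L_0=2,L_1=1$ (so $F_{-n}=(-1)^{n-1}F_n$, $L_{-n}=(-1)^nL_n$). Jacobsthal numbers $J_n$ and Jacobsthal–Lucas numbers $j_n$: $J_n=J_{n-1}+2J_{n-2}$, $j_n=j_{n-1}+2j_{n-2}$ for all $n\in\mathbb Z$, with $J_0=0,J_1=1,j_0=2,j_1=1$ (so $J_{-n}=(-1)^{n-1}2^{-n}J_n$, $j_{-n}=(-1)^n2^{-n}j_n$, rational for negative index). Pell numbers $P_n$ and Pell–Lucas numbers $Q_n$: $P_n=2P_{n-1}+P_{n-2}$, $Q_n=2Q_{n-1}+Q_{n-2}$ for all $n\in\mathbb Z$, with $P_0=0,P_1=1,Q_0=2,Q_1=2$ (so $P_{-n}=(-1)^{n-1}P_n$, $Q_{-n}=(-1)^nQ_n$). Summation convention: for an integer $k<0$, $\sum_{r=0}^k f_r$ means $-\sum_{r=k+1}^{-1} f_r$ (in particular it equals $0$ when $k=-1$). *)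

theory Defs
  imports Complex_Main
begin

text \<open>Second-order linear recurrence W_n = p W_(n-1) + q W_(n-2) with W_0 = w0, W_1 = w1,
extended to all integer indices (q nonzero) by running the recurrence backwards.\<close>

fun rec_fwd :: "real \<Rightarrow> real \<Rightarrow> real \<Rightarrow> real \<Rightarrow> nat \<Rightarrow> real" where
  "rec_fwd p q w0 w1 0 = w0"
| "rec_fwd p q w0 w1 (Suc 0) = w1"
| "rec_fwd p q w0 w1 (Suc (Suc n)) = p * rec_fwd p q w0 w1 (Suc n) + q * rec_fwd p q w0 w1 n"

fun rec_bwd :: "real \<Rightarrow> real \<Rightarrow> real \<Rightarrow> real \<Rightarrow> nat \<Rightarrow> real" where
  "rec_bwd p q w0 w1 0 = w0"
| "rec_bwd p q w0 w1 (Suc 0) = (w1 - p * w0) / q"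
| "rec_bwd p q w0 w1 (Suc (Suc n)) = (rec_bwd p q w0 w1 n - p * rec_bwd p q w0 w1 (Suc n)) / q"

definition lrec :: "real \<Rightarrow> real \<Rightarrow> real \<Rightarrow> real \<Rightarrow> int \<Rightarrow> real" where
  "lrec p q w0 w1 n = (if 0 \<le> n then rec_fwd p q w0 w1 (nat n) else rec_bwd p q w0 w1 (nat (- n)))"

definition Fib :: "int \<Rightarrow> real" where "Fib = lrec 1 1 0 1"
definition Luc :: "int \<Rightarrow> real" where "Luc = lrec 1 1 2 1"
definition Jac :: "int \<Rightarrow> real" where "Jac = lrec 1 2 0 1"
definition JacL :: "int \<Rightarrow> real" where "JacL = lrec 1 2 2 1"
definition Pell :: "int \<Rightarrow> real" where "Pell = lrec 2 1 0 1"
definition PellL :: "int \<Rightarrow> real" where "PellL = lrec 2 1 2 2"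

text \<open>Summation convention: for k >= 0 the sum over r = 0..k; for k < 0 it is
minus the sum over r = k+1..-1.\<close>
definition isum :: "(int \<Rightarrow> real) \<Rightarrow> int \<Rightarrow> real" where
  "isum f k = (if 0 \<le> k then (\<Sum>r\<in>{0..k}. f r) else - (\<Sum>r\<in>{k+1..-1}. f r))"

end

theory Submission
  imports Defs
begin

text \<open>
  All six sequences satisfy a recurrence W(n) = p W(n-1) + q W(n-2) whose characteristic
  polynomial has distinct real roots \<alpha>, \<beta>, so X and Y are combinations of \<alpha>^n and \<beta>^n.
  In this Binet form a direct computation gives the three-term relation
  D2 Y(n - b + c) = Dxy X(n) - D1 X(n - a + c) for all n. Writing x = Dxy / D1,
  the relation says that the r-th summand equals (D1/D2) (g(r+1) - g(r)) with
  g(r) = x^r X(m - (k - r + 1)(a - c)), so the sum telescopes.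
\<close>

lemma characteristic_roots:
  fixes p q :: real
  assumes "0 < p^2 + 4 * q" and "q \<noteq> 0"
  obtains al be where "p = al + be" and "q = - (al * be)"
    and "al \<noteq> be" and "al \<noteq> 0" and "be \<noteq> 0"
proof
  define s where "s = sqrt (p^2 + 4 * q)"
  have s: "s^2 = p^2 + 4 * q" "0 < s" using assms by (simp_all add: s_def)
  show "p = (p + s) / 2 + (p - s) / 2" by (simp add: field_simps)
  show q: "q = - ((p + s) / 2 * ((p - s) / 2))" using s(1) by (simp add: field_simps power2_eq_square)
  show "(p + s) / 2 \<noteq> (p - s) / 2" using s(2) by simp
  show "(p + s) / 2 \<noteq> 0" and "(p - s) / 2 \<noteq> 0" using q assms(2) by auto
qed

lemma rec_fwd_binet:
  fixes al be A B :: real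
  shows "rec_fwd (al + be) (- (al * be)) (A + B) (A * al + B * be) n = A * al ^ n + B * be ^ n"
  by (induction n rule: induct_nat_012) (simp_all add: algebra_simps)

lemma rec_bwd_binet:
  fixes al be A B :: real
  assumes "al \<noteq> 0" and "be \<noteq> 0"
  shows "rec_bwd (al + be) (- (al * be)) (A + B) (A * al + B * be) n
       = A * inverse al ^ n + B * inverse be ^ n"
proof (induction n rule: induct_nat_012)
  case 1
  have "(A * al + B * be - (al + be) * (A + B)) / - (al * be) = A / al + B / be"
    using assms by (simp add: field_simps)
  then show ?case by (simp add: divide_inverse)
next
  case (ge2 n)
  have "A * inverse al ^ Suc (Suc n) + B * inverse be ^ Suc (Suc n)
      = (A * inverse al ^ n + B * inverse be ^ n
         - (al + be) * (A * inverse al ^ Suc n + B * inverse be ^ Suc n)) / - (al * be)"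
    using assms by (simp add: field_simps)
  with ge2 show ?case by simp
qed simp

lemma binet_initial_values:
  fixes al be w0 w1 :: real
  assumes "al \<noteq> be"
  shows "w0 = (w1 - be * w0) / (al - be) + (al * w0 - w1) / (al - be)"
    and "w1 = (w1 - be * w0) / (al - be) * al + (al * w0 - w1) / (al - be) * be"
proof -
  have ne: "al - be \<noteq> 0" using assms by simp
  have "(w1 - be * w0) / (al - be) + (al * w0 - w1) / (al - be) = w0 * (al - be) / (al - be)"
    by (simp add: add_divide_distrib[symmetric] algebra_simps)
  then show "w0 = (w1 - be * w0) / (al - be) + (al * w0 - w1) / (al - be)" using ne by simp
  have "(w1 - be * w0) / (al - be) * al + (al * w0 - w1) / (al - be) * be = w1 * (al - be) / (al - be)"
    by (simp add: add_divide_distrib[symmetric] algebra_simps)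
  then show "w1 = (w1 - be * w0) / (al - be) * al + (al * w0 - w1) / (al - be) * be" using ne by simp
qed

lemma lrec_binet:
  fixes al be w0 w1 :: real
  assumes "al \<noteq> be" and "al \<noteq> 0" and "be \<noteq> 0"
  shows "lrec (al + be) (- (al * be)) w0 w1 n
       = (w1 - be * w0) / (al - be) * al powi n + (al * w0 - w1) / (al - be) * be powi n"
proof -
  define A B where "A = (w1 - be * w0) / (al - be)" and "B = (al * w0 - w1) / (al - be)"
  have w: "w0 = A + B" "w1 = A * al + B * be"
    unfolding A_def B_def by (fact binet_initial_values[OF \<open>al \<noteq> be\<close>])+
  have "lrec (al + be) (- (al * be)) (A + B) (A * al + B * be) n = A * al powi n + B * be powi n"
  proof (cases "0 \<le> n")
    case True
    then show ?thesis by (simp add: lrec_def rec_fwd_binet power_int_def)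
  next
    case False
    then have "n = - int (nat (- n))" by simp
    then show ?thesis
      unfolding lrec_def using False rec_bwd_binet[OF assms(2,3)]
      by (metis power_int_minus power_int_of_nat power_inverse)
  qed
  from this[folded w] show ?thesis by (simp add: A_def B_def)
qed

lemma binet_three_term_identity:
  fixes X Y :: "int \<Rightarrow> real" and al be A1 B1 A2 B2 :: real and a b c d e n :: int
  assumes "al \<noteq> 0" and "be \<noteq> 0"
    and X: "\<And>n. X n = A1 * al powi n + B1 * be powi n"
    and Y: "\<And>n. Y n = A2 * al powi n + B2 * be powi n"
  shows "(X (d - a) * X (e - c) - X (e - a) * X (d - c)) * Y (n - b + c)
       = (X (d - a) * Y (e - b) - X (e - a) * Y (d - b)) * X n
       - (X (d - c) * Y (e - b) - X (e - c) * Y (d - b)) * X (n - a + c)"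
proof -
  have "n - b + c = n + c - b" "n - a + c = n + c - a" by simp_all
  then show ?thesis unfolding X Y using assms
    by (simp add: power_int_diff power_int_add field_simps)
qed

lemma lrec_three_term_identity:
  fixes p q x0 x1 y0 y1 :: real and X Y :: "int \<Rightarrow> real"
  assumes "0 < p^2 + 4 * q" and "q \<noteq> 0"
    and X: "X = lrec p q x0 x1" and Y: "Y = lrec p q y0 y1"
  shows "(X (d - a) * X (e - c) - X (e - a) * X (d - c)) * Y (n - b + c)
       = (X (d - a) * Y (e - b) - X (e - a) * Y (d - b)) * X n
       - (X (d - c) * Y (e - b) - X (e - c) * Y (d - b)) * X (n - a + c)"
proof -
  obtain al be where pq: "p = al + be" "q = - (al * be)"
    and roots: "al \<noteq> be" "al \<noteq> 0" "be \<noteq> 0"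
    using characteristic_roots[OF assms(1,2)] by blast
  show ?thesis
    by (rule binet_three_term_identity[OF roots(2,3)])
      (simp_all only: X Y pq lrec_binet[OF roots])
qed

lemma companion_pairs_lrec:
  assumes "(X, Y) \<in> {(Fib, Luc), (Luc, Fib), (Jac, JacL), (JacL, Jac), (Pell, PellL), (PellL, Pell)}"
  obtains p q x0 x1 y0 y1 where "0 < p^2 + 4 * q" and "q \<noteq> 0"
    and "X = lrec p q x0 x1" and "Y = lrec p q y0 y1"
  using assms unfolding Fib_def Luc_def Jac_def JacL_def Pell_def PellL_def
  by (elim insertE emptyE; simp) (rule that; simp)+

lemma sum_int_interval_telescope:
  fixes h :: "int \<Rightarrow> real"
  assumes "i - 1 \<le> j"
  shows "(\<Sum>r\<in>{i..j}. h (r + 1) - h r) = h (j + 1) - h i"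
  using assms
proof (induction j rule: int_ge_induct)
  case base
  then show ?case by simp
next
  case (step j)
  then have "{i..j + 1} = insert (j + 1) {i..j}" by auto
  with step show ?case by simp
qed

lemma isum_telescope: "isum (\<lambda>r. h (r + 1) - h r) k = h (k + 1) - h 0"
  by (simp add: isum_def sum_int_interval_telescope)

lemma isum_cong:
  assumes "\<And>r. 0 \<le> r \<and> r \<le> k \<or> k < r \<and> r < 0 \<Longrightarrow> f r = g r"
  shows "isum f k = isum g k"
  using assms unfolding isum_def by (auto intro!: sum.cong)

lemma isum_mult_left: "isum (\<lambda>r. c * f r) k = c * isum f k"
  by (simp add: isum_def sum_distrib_left)

lemma isum_powi_three_term:
  fixes X Y :: "int \<Rightarrow> real" and a b c k m :: int and Dxy D1 D2 :: real
  assumes three_term: "\<And>n. D2 * Y (n - b + c) = Dxy * X n - D1 * X (n - a + c)"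
    and "D1 \<noteq> 0" and "D2 \<noteq> 0" and "k < 0 \<longrightarrow> Dxy \<noteq> 0"
  shows "isum (\<lambda>r. (Dxy / D1) powi r * Y (m - k * (a - c) - b + c + (a - c) * r)) k
     = Dxy / D2 * (Dxy / D1) powi k * X m - D1 / D2 * X (m - (k + 1) * (a - c))"
proof -
  define x where "x = Dxy / D1"
  have Dxy: "Dxy = D1 * x" using \<open>D1 \<noteq> 0\<close> by (simp add: x_def)
  have x_nonzero: "x \<noteq> 0" if "k < 0" using that assms(2,4) by (simp add: x_def)
  define g where "g r = x powi r * X (m - (k - r + 1) * (a - c))" for r
  \<comment> \<open>The side condition is needed because \<open>0 powi (-1) = 0\<close> breaks \<open>x powi (r + 1) = x powi r * x\<close>.\<close>
  have summand: "x powi r * Y (m - k * (a - c) - b + c + (a - c) * r) = D1 / D2 * (g (r + 1) - g r)"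
    if "x \<noteq> 0 \<or> 0 \<le> r" for r
  proof -
    define n where "n = m - (k - r) * (a - c)"
    have indices: "m - k * (a - c) - b + c + (a - c) * r = n - b + c"
      "m - (k - (r + 1) + 1) * (a - c) = n" "m - (k - r + 1) * (a - c) = n - a + c"
      by (simp_all add: n_def algebra_simps)
    have power_Suc: "x powi (r + 1) = x powi r * x" using that by (intro power_int_add_1) auto
    have Y_n: "Y (n - b + c) = (Dxy * X n - D1 * X (n - a + c)) / D2"
      using three_term[of n] \<open>D2 \<noteq> 0\<close> by (simp add: field_simps)
    show ?thesis unfolding g_def indices power_Suc Y_n Dxy using \<open>D2 \<noteq> 0\<close>
      by (simp add: field_simps)
  qed
  have "isum (\<lambda>r. x powi r * Y (m - k * (a - c) - b + c + (a - c) * r)) k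
      = isum (\<lambda>r. D1 / D2 * (g (r + 1) - g r)) k"
    by (rule isum_cong, rule summand) (use x_nonzero in force)
  also have "\<dots> = D1 / D2 * (g (k + 1) - g 0)"
    by (simp only: isum_mult_left isum_telescope)
  also have "\<dots> = Dxy / D2 * x powi k * X m - D1 / D2 * X (m - (k + 1) * (a - c))"
  proof -
    have "x powi (k + 1) = x powi k * x" using x_nonzero by (intro power_int_add_1) auto
    then show ?thesis unfolding g_def Dxy using \<open>D2 \<noteq> 0\<close> by (simp add: field_simps)
  qed
  finally show ?thesis by (simp add: x_def)
qed

theorem theorem4:
  fixes X Y :: "int \<Rightarrow> real" and a b c d e k m :: int
  assumes pair: "(X, Y) \<in> {(Fib, Luc), (Luc, Fib), (Jac, JacL), (JacL, Jac), (Pell, PellL), (PellL, Pell)}"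
    and D1: "X (d - c) * Y (e - b) - X (e - c) * Y (d - b) \<noteq> 0"
    and D2: "X (d - a) * X (e - c) - X (e - a) * X (d - c) \<noteq> 0"
    and Dxy: "k < 0 \<longrightarrow> X (d - a) * Y (e - b) - X (e - a) * Y (d - b) \<noteq> 0"
  shows "isum (\<lambda>r. ((X (d - a) * Y (e - b) - X (e - a) * Y (d - b))
                      / (X (d - c) * Y (e - b) - X (e - c) * Y (d - b))) powi r
                  * Y (m - k * (a - c) - b + c + (a - c) * r)) k
       = (X (d - a) * Y (e - b) - X (e - a) * Y (d - b))
           / (X (d - a) * X (e - c) - X (e - a) * X (d - c))
         * ((X (d - a) * Y (e - b) - X (e - a) * Y (d - b))
             / (X (d - c) * Y (e - b) - X (e - c) * Y (d - b))) powi k * X m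
         - (X (d - c) * Y (e - b) - X (e - c) * Y (d - b))
           / (X (d - a) * X (e - c) - X (e - a) * X (d - c))
         * X (m - (k + 1) * (a - c))"
proof -
  obtain p q x0 x1 y0 y1 where "0 < p^2 + 4 * q" "q \<noteq> 0"
    and "X = lrec p q x0 x1" "Y = lrec p q y0 y1"
    using companion_pairs_lrec[OF pair] by blast
  then have "\<And>n. (X (d - a) * X (e - c) - X (e - a) * X (d - c)) * Y (n - b + c)
      = (X (d - a) * Y (e - b) - X (e - a) * Y (d - b)) * X n
      - (X (d - c) * Y (e - b) - X (e - c) * Y (d - b)) * X (n - a + c)"
    by (rule lrec_three_term_identity)
  then show ?thesis by (rule isum_powi_three_term[OF _ D1 D2 Dxy])
qed

end
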